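(* Every finite nonempty set of negative integers is the signed degree set of some connected signed bipartite graph.
   Context: A signed bipartite graph $G(U,V)$ is a finite simple bipartite graph with bipartition $U, V$ (both nonempty, every edge joining a vertex of $U$ to a vertex of $V$) in which each edge is assigned a sign, positive or negative. The signed degree of a vertex $x$ is $\mathrm{sdeg}(x) = d^+(x) - d^-(x)$, where $d^+(x)$ (resp. $d^-(x)$) is the number of positive (resp. negative) edges incident with $x$. The signed degree set of $G(U,V)$ is the set of distinct signed degrees of its vertices. $G(U,V)$ is called connected if each vertex of $U$ is connected (by a path) to every vertex of $V$. *)

theory Defs
  imports Main
begin

text \<open>Simplicity: each such pair carries at most one edge,
i.e. P and N are disjoint.\<close>

definition signed_bipartite :: "'v set \<Rightarrow> 'v set \<Rightarrow> ('v \<times> 'v) set \<Rightarrow> ('v \<times> 'v) set \<Rightarrow> bool" where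
  "signed_bipartite U V P N \<longleftrightarrow>
     finite U \<and> finite V \<and> U \<noteq> {} \<and> V \<noteq> {} \<and> U \<inter> V = {} \<and>
     P \<subseteq> U \<times> V \<and> N \<subseteq> U \<times> V \<and> P \<inter> N = {}"

definition inc_deg :: "('v \<times> 'v) set \<Rightarrow> 'v \<Rightarrow> nat" where
  "inc_deg E x = card {y. (x, y) \<in> E \<or> (y, x) \<in> E}"

definition sdeg :: "('v \<times> 'v) set \<Rightarrow> ('v \<times> 'v) set \<Rightarrow> 'v \<Rightarrow> int" where
  "sdeg P N x = int (inc_deg P x) - int (inc_deg N x)"

definition signed_degree_set :: "'v set \<Rightarrow> 'v set \<Rightarrow> ('v \<times> 'v) set \<Rightarrow> ('v \<times> 'v) set \<Rightarrow> int set" where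
  "signed_degree_set U V P N = sdeg P N ` (U \<union> V)"

definition adj :: "('v \<times> 'v) set \<Rightarrow> ('v \<times> 'v) set \<Rightarrow> 'v \<Rightarrow> 'v \<Rightarrow> bool" where
  "adj P N x y \<longleftrightarrow> (x, y) \<in> P \<union> N \<or> (y, x) \<in> P \<union> N"

definition sb_connected :: "'v set \<Rightarrow> 'v set \<Rightarrow> ('v \<times> 'v) set \<Rightarrow> ('v \<times> 'v) set \<Rightarrow> bool" where
  "sb_connected U V P N \<longleftrightarrow> (\<forall>u\<in>U. \<forall>v\<in>V. (adj P N)\<^sup>*\<^sup>* u v)"

end

theory Submission
  imports Defs
begin

text \<open>Write the set as \<open>-A\<close> with \<open>A\<close> a finite set of \<open>n\<close> positive integers and \<open>m = Max A\<close>, and let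
\<open>rank A x\<close> be the number of elements of \<open>A\<close> below \<open>x\<close>. On two copies of \<open>{1..m}\<close> join \<open>i\<close> and \<open>j\<close>
by a negative edge iff \<open>rank A i + rank A j < n\<close>. Since \<open>rank A\<close> is a nondecreasing step function
that jumps exactly after the elements of \<open>A\<close>, the neighbourhood of \<open>i\<close> is \<open>{1..a}\<close> where \<open>a\<close> is
the element of \<open>A\<close> of rank \<open>n - 1 - rank A i\<close>. As \<open>rank A i\<close> runs through all of \<open>{..<n}\<close>,
the degrees are exactly the elements of \<open>A\<close>. Vertex \<open>1\<close> has rank \<open>0\<close>, so it is adjacent to the
whole opposite side, which makes the graph connected.\<close>

definition rank :: "nat set \<Rightarrow> nat \<Rightarrow> nat" where
  "rank A x = card {a\<in>A. a < x}"

lemma rank_mono: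
  assumes "finite A" "x \<le> y"
  shows "rank A x \<le> rank A y"
  unfolding rank_def using assms by (intro card_mono) auto

lemma rank_strict_mono:
  assumes "finite A" "a \<in> A" "x \<le> a" "a < y"
  shows "rank A x < rank A y"
  unfolding rank_def
proof (rule psubset_card_mono)
  have "{b\<in>A. b < x} \<subseteq> {b\<in>A. b < y}"
    using assms(3,4) by auto
  moreover have "a \<in> {b\<in>A. b < y}" "a \<notin> {b\<in>A. b < x}"
    using assms(2-4) by auto
  ultimately show "{b\<in>A. b < x} \<subset> {b\<in>A. b < y}"
    by blast
qed (use assms(1) in simp)

lemma rank_le_rank_iff:
  assumes "finite A" "a \<in> A"
  shows "rank A x \<le> rank A a \<longleftrightarrow> x \<le> a"
proof
  assume "x \<le> a"
  then show "rank A x \<le> rank A a"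
    by (rule rank_mono[OF assms(1)])
next
  assume le: "rank A x \<le> rank A a"
  show "x \<le> a"
  proof (rule ccontr)
    assume "\<not> x \<le> a"
    then have "rank A a < rank A x"
      by (intro rank_strict_mono[OF assms order.refl]) simp
    with le show False
      by simp
  qed
qed

lemma rank_less_card:
  assumes "finite A" "A \<noteq> {}" "x \<le> Max A"
  shows "rank A x < card A"
  unfolding rank_def
proof (rule psubset_card_mono)
  have "Max A \<in> A"
    using assms(1,2) by (rule Max_in)
  moreover have "\<not> Max A < x"
    using assms(3) by simp
  ultimately show "{a\<in>A. a < x} \<subset> A"
    by blast
qed (use assms(1) in simp)

lemma rank_image:
  assumes "finite A" "A \<noteq> {}"
  shows "rank A ` A = {..<card A}"
proof -
  have "inj_on (rank A) A"
  proof (rule inj_onI)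
    fix x y assume x: "x \<in> A" and y: "y \<in> A" and eq: "rank A x = rank A y"
    have "x \<le> y"
      using rank_le_rank_iff[OF assms(1) y, of x] eq by simp
    moreover have "y \<le> x"
      using rank_le_rank_iff[OF assms(1) x, of y] eq by simp
    ultimately show "x = y"
      by simp
  qed
  then have "card (rank A ` A) = card {..<card A}"
    by (simp add: card_image)
  moreover have "rank A ` A \<subseteq> {..<card A}"
    using rank_less_card[OF assms] Max_ge[OF assms(1)] by auto
  ultimately show ?thesis
    using card_subset_eq[OF finite_lessThan] by blast
qed

lemma rank_image_interval:
  assumes "finite A" "A \<noteq> {}" "\<forall>a\<in>A. 0 < a"
  shows "rank A ` {1..Max A} = {..<card A}"
proof
  have "A \<subseteq> {1..Max A}"
    using assms by (auto simp: Suc_le_eq)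
  then show "{..<card A} \<subseteq> rank A ` {1..Max A}"
    using rank_image[OF assms(1,2)] by blast
qed (use rank_less_card[OF assms(1,2)] in auto)

definition rank_degree :: "nat set \<Rightarrow> nat \<Rightarrow> nat" where
  "rank_degree A i = card {j\<in>{1..Max A}. rank A i + rank A j < card A}"

lemma rank_degree_eq:
  assumes "finite A" "a \<in> A" "rank A i + rank A a + 1 = card A"
  shows "rank_degree A i = a"
proof -
  have "rank A i + rank A j < card A \<longleftrightarrow> j \<le> a" for j
    using rank_le_rank_iff[OF assms(1,2), of j] assms(3) by linarith
  then have "{j\<in>{1..Max A}. rank A i + rank A j < card A} = {j\<in>{1..Max A}. j \<le> a}"
    by simp
  also have "\<dots> = {1..a}"
    using Max_ge[OF assms(1,2)] by auto
  finally show ?thesis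
    by (simp add: rank_degree_def)
qed

lemma rank_degree_image:
  assumes "finite A" "A \<noteq> {}" "\<forall>a\<in>A. 0 < a"
  shows "rank_degree A ` {1..Max A} = A"
proof (intro equalityI subsetI)
  fix d assume "d \<in> rank_degree A ` {1..Max A}"
  then obtain i where i: "i \<in> {1..Max A}" and d: "d = rank_degree A i"
    by blast
  have "rank A i < card A"
    using i rank_less_card[OF assms(1,2)] by simp
  then have "card A - 1 - rank A i \<in> rank A ` A"
    using rank_image[OF assms(1,2)] by auto
  then obtain a where "a \<in> A" "rank A a = card A - 1 - rank A i"
    by auto
  with \<open>rank A i < card A\<close> show "d \<in> A"
    using d rank_degree_eq[OF assms(1)] by simp
next
  fix a assume a: "a \<in> A"
  have "rank A a < card A"
    using a rank_image[OF assms(1,2)] by auto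
  then have "card A - 1 - rank A a \<in> rank A ` {1..Max A}"
    using rank_image_interval[OF assms] by auto
  then obtain i where "i \<in> {1..Max A}" "rank A i = card A - 1 - rank A a"
    by auto
  with a \<open>rank A a < card A\<close> show "a \<in> rank_degree A ` {1..Max A}"
    using rank_degree_eq[OF assms(1) a, of i] by force
qed

lemma sb_connected_of_dominating_vertices:
  assumes "u\<^sub>0 \<in> U" "v\<^sub>0 \<in> V"
    and "\<forall>v\<in>V. adj P N u\<^sub>0 v" "\<forall>u\<in>U. adj P N u v\<^sub>0"
  shows "sb_connected U V P N"
  unfolding sb_connected_def
proof (intro ballI)
  fix u v assume "u \<in> U" "v \<in> V"
  then have "adj P N u v\<^sub>0" "adj P N v\<^sub>0 u\<^sub>0" "adj P N u\<^sub>0 v"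
    using assms by (auto simp: adj_def)
  then show "(adj P N)\<^sup>*\<^sup>* u v"
    by (meson converse_rtranclp_into_rtranclp r_into_rtranclp)
qed

lemma signed_degree_set_negative:
  "signed_degree_set U V {} N = (\<lambda>x. - int (inc_deg N x)) ` (U \<union> V)"
  by (simp add: signed_degree_set_def sdeg_def inc_deg_def)

definition rank_graph :: "nat set \<Rightarrow> (nat \<times> nat) set" where
  "rank_graph A = {(i, Max A + j) | i j. i \<in> {1..Max A} \<and> j \<in> {1..Max A}
                                        \<and> rank A i + rank A j < card A}"

lemma inc_deg_rank_graph_left:
  assumes "i \<in> {1..Max A}"
  shows "inc_deg (rank_graph A) i = rank_degree A i"
proof -
  have "{y. (i, y) \<in> rank_graph A \<or> (y, i) \<in> rank_graph A}
          = (+) (Max A) ` {j\<in>{1..Max A}. rank A i + rank A j < card A}"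
    using assms by (auto simp: rank_graph_def)
  then show ?thesis
    by (simp add: inc_deg_def rank_degree_def card_image)
qed

lemma inc_deg_rank_graph_right:
  assumes "j \<in> {1..Max A}"
  shows "inc_deg (rank_graph A) (Max A + j) = rank_degree A j"
proof -
  have "{y. (Max A + j, y) \<in> rank_graph A \<or> (y, Max A + j) \<in> rank_graph A}
          = {i\<in>{1..Max A}. rank A j + rank A i < card A}"
    using assms by (auto simp: rank_graph_def add.commute)
  then show ?thesis
    by (simp add: inc_deg_def rank_degree_def)
qed

lemma signed_bipartite_rank_graph:
  assumes "finite A" "A \<noteq> {}" "\<forall>a\<in>A. 0 < a"
  shows "signed_bipartite {1..Max A} ((+) (Max A) ` {1..Max A}) {} (rank_graph A)"
  using assms Max_in[OF assms(1,2)]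
  by (fastforce simp: signed_bipartite_def rank_graph_def)

lemma sb_connected_rank_graph:
  assumes "finite A" "A \<noteq> {}" "\<forall>a\<in>A. 0 < a"
  shows "sb_connected {1..Max A} ((+) (Max A) ` {1..Max A}) {} (rank_graph A)"
proof (rule sb_connected_of_dominating_vertices)
  have "0 < Max A"
    using assms Max_in[OF assms(1,2)] by blast
  then show "1 \<in> {1..Max A}" "Max A + 1 \<in> (+) (Max A) ` {1..Max A}"
    by auto
  have "rank A 1 = 0"
    using assms(3) by (auto simp: rank_def)
  then have edge: "(1, Max A + j) \<in> rank_graph A" "(j, Max A + 1) \<in> rank_graph A"
    if "j \<in> {1..Max A}" for j
    using rank_less_card[OF assms(1,2)] that \<open>1 \<in> {1..Max A}\<close>
    by (auto simp: rank_graph_def)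
  show "\<forall>v\<in>(+) (Max A) ` {1..Max A}. adj {} (rank_graph A) 1 v"
    using edge(1) unfolding adj_def by blast
  show "\<forall>u\<in>{1..Max A}. adj {} (rank_graph A) u (Max A + 1)"
    using edge(2) unfolding adj_def by blast
qed

lemma signed_degree_set_rank_graph:
  assumes "finite A" "A \<noteq> {}" "\<forall>a\<in>A. 0 < a"
  shows "signed_degree_set {1..Max A} ((+) (Max A) ` {1..Max A}) {} (rank_graph A)
           = (\<lambda>a. - int a) ` A"
proof -
  have "inc_deg (rank_graph A) ` {1..Max A} = rank_degree A ` {1..Max A}"
    by (rule image_cong[OF refl inc_deg_rank_graph_left])
  moreover have "inc_deg (rank_graph A) ` (+) (Max A) ` {1..Max A} = rank_degree A ` {1..Max A}"
    unfolding image_image by (rule image_cong[OF refl inc_deg_rank_graph_right])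
  ultimately have "inc_deg (rank_graph A) ` ({1..Max A} \<union> (+) (Max A) ` {1..Max A}) = A"
    unfolding image_Un rank_degree_image[OF assms] by simp
  then show ?thesis
    unfolding signed_degree_set_negative by (metis image_image)
qed

theorem corollary2p1:
  fixes S :: "int set"
  assumes "finite S" and "S \<noteq> {}" and "\<forall>s\<in>S. s < 0"
  shows "\<exists>(U :: nat set) V P N. signed_bipartite U V P N \<and> sb_connected U V P N
           \<and> signed_degree_set U V P N = S"
proof -
  define A where "A = (\<lambda>s. nat (- s)) ` S"
  have A: "finite A" "A \<noteq> {}" "\<forall>a\<in>A. 0 < a"
    using assms by (auto simp: A_def)
  have "(\<lambda>a. - int a) ` A = S"
    using assms(3) by (force simp: A_def image_image)
  then show ?thesis
    using signed_bipartite_rank_graph[OF A] sb_connected_rank_graph[OF A]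
      signed_degree_set_rank_graph[OF A]
    by metis
qed

end
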